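(* Let $\phi_1,\phi_2\in D=\{z\in\mathbb{C};|z|<1\}$ and let $Z$ be a random variable on the unit circle $\partial D$ with density, with respect to arc length, $$f(z)=\frac{1}{2\pi}\frac{|1-\phi_1\overline{\phi_2}|^2}{1-|\phi_1\overline{\phi_2}|^2}\frac{1-|\phi_1|^2}{|z-\phi_1|^2}\frac{1-|\phi_2|^2}{|z-\phi_2|^2}.$$ Then the skewness $s$ of $Z$ is $$s=\frac{|1-\phi_1\overline{\phi_2}|^2}{(1-|\phi_1\overline{\phi_2}|^2)^3}\rho^{-2}(1-\rho)^{-3/2}\operatorname{Im}(\phi_1\overline{\phi_2})(|\phi_1|^2-|\phi_2|^2)(1-|\phi_1|^2)(1-|\phi_2|^2),$$ where $\rho=|(1-|\phi_2|^2)\phi_1+(1-|\phi_1|^2)\phi_2|/(1-|\phi_1\overline{\phi_2}|^2)$.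
   Context: For a random variable $Z$ on the unit circle with $E(Z)\neq 0$, the mean direction is $\zeta=\arg\{E(Z)\}$, the mean resultant length is $\delta=|E(Z)|$, and the (Mardia) skewness is $s=E[\operatorname{Im}\{(Z\mathrm{e}^{-\mathrm{i}\zeta})^2\}]/(1-\delta)^{3/2}$. *)

theory Defs
  imports "HOL-Analysis.Analysis"
begin

text \<open>A random variable Z on the unit circle with density f (w.r.t. arc length):
  the expectation of g(Z) is the integral of g(e^{it}) f(e^{it}) over t in [0, 2 pi].\<close>
definition circ_expect :: "(complex \<Rightarrow> real) \<Rightarrow> (complex \<Rightarrow> complex) \<Rightarrow> complex" where
  "circ_expect f g = integral {0..2*pi} (\<lambda>t. of_real (f (cis t)) * g (cis t))"

definition circ_mean :: "(complex \<Rightarrow> real) \<Rightarrow> complex" where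
  "circ_mean f = circ_expect f (\<lambda>z. z)"

definition mean_direction :: "(complex \<Rightarrow> real) \<Rightarrow> real" where
  "mean_direction f = Arg (circ_mean f)"

definition mean_resultant_length :: "(complex \<Rightarrow> real) \<Rightarrow> real" where
  "mean_resultant_length f = cmod (circ_mean f)"

text \<open>Mardia skewness s = E[Im((Z e^{-i zeta})^2)] / (1 - delta)^{3/2}\<close>
definition circ_skewness :: "(complex \<Rightarrow> real) \<Rightarrow> real" where
  "circ_skewness f =
     Re (circ_expect f (\<lambda>z. of_real (Im ((z * cis (- mean_direction f))\<^sup>2))))
     / (1 - mean_resultant_length f) powr (3/2)"

definition pc_density :: "complex \<Rightarrow> complex \<Rightarrow> complex \<Rightarrow> real" where
  "pc_density \<phi>1 \<phi>2 z =
     1 / (2*pi) * ((cmod (1 - \<phi>1 * cnj \<phi>2))\<^sup>2 / (1 - (cmod (\<phi>1 * cnj \<phi>2))\<^sup>2))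
     * ((1 - (cmod \<phi>1)\<^sup>2) / (cmod (z - \<phi>1))\<^sup>2)
     * ((1 - (cmod \<phi>2)\<^sup>2) / (cmod (z - \<phi>2))\<^sup>2)"

end

theory Submission
  imports Defs "HOL-Complex_Analysis.Complex_Analysis"
begin

text \<open>On the unit circle cnj z = 1/z, so |z - \<phi>|^2 = (z - \<phi>)(1 - cnj \<phi> z)/z, and the density
  times z^k is a rational function whose only poles in the closed disc are \<phi>1 and \<phi>2. By Cauchy's
  formula the moments E(Z^k) are the divided differences at \<phi>1, \<phi>2 of
  z^(k+1) / ((1 - cnj \<phi>1 z)(1 - cnj \<phi>2 z)), which gives E(Z) and E(Z^2) in closed form.
  Since e^(-i\<zeta>) = cnj (E Z) / |E Z|, the skewness is Im (cnj (E Z)^2 E(Z^2)) / (|E Z|^2 (1 - |E Z|)^(3/2)),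
  and the numerator factors by a polynomial identity.\<close>

definition divided_diff :: "(complex \<Rightarrow> complex) \<Rightarrow> complex \<Rightarrow> complex \<Rightarrow> complex" where
  "divided_diff F a b = (if a = b then deriv F a else (F a - F b) / (a - b))"

lemma has_contour_integral_two_poles_circlepath:
  fixes F :: "complex \<Rightarrow> complex"
  assumes cont: "continuous_on (cball c r) F" and hol: "F holomorphic_on ball c r"
    and a: "a \<in> ball c r" and b: "b \<in> ball c r"
  shows "((\<lambda>z. F z / ((z - a) * (z - b))) has_contour_integral
           2 * of_real pi * \<i> * divided_diff F a b) (circlepath c r)"
proof (cases "a = b")
  case True
  then show ?thesis
    using Cauchy_has_contour_integral_higher_derivative_circlepath[OF cont hol a, of 1]
    by (simp add: divided_diff_def power2_eq_square)
next
  case False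
  have "norm (a - c) < r" "norm (b - c) < r"
    using a b by (simp_all add: dist_norm norm_minus_commute)
  then have "((\<lambda>z. (F z / (z - a) - F z / (z - b)) / (a - b)) has_contour_integral
               (2 * of_real pi * \<i> * F a - 2 * of_real pi * \<i> * F b) / (a - b)) (circlepath c r)"
    by (intro has_contour_integral_div has_contour_integral_diff
              Cauchy_integral_circlepath[OF cont hol])
  then have "((\<lambda>z. (F z / (z - a) - F z / (z - b)) / (a - b)) has_contour_integral
               2 * of_real pi * \<i> * divided_diff F a b) (circlepath c r)"
    using False by (simp add: divided_diff_def right_diff_distrib[symmetric] mult.assoc)
  then show ?thesis
  proof (rule has_contour_integral_eq)
    fix z assume "z \<in> path_image (circlepath c r)"
    with a b have "z \<noteq> a" "z \<noteq> b"
      by (auto simp: path_image_circlepath dist_commute)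
    with False show "(F z / (z - a) - F z / (z - b)) / (a - b) = F z / ((z - a) * (z - b))"
      by (simp add: divide_simps) (simp add: algebra_simps)
  qed
qed

lemma has_contour_integral_unit_circlepath_iff:
  "(g has_contour_integral I) (circlepath 0 1) \<longleftrightarrow>
     ((\<lambda>t. g (cis t) * \<i> * cis t) has_integral I) {0..2*pi}"
  unfolding circlepath_def by (subst has_contour_integral_part_circlepath_iff) auto

lemma norm_diff_square_on_unit_circle:
  assumes "cmod z = 1"
  shows "complex_of_real ((cmod (z - a))\<^sup>2) = (z - a) * (1 - cnj a * z) / z"
proof -
  have "z \<noteq> 0" "z * cnj z = 1"
    using assms by (auto simp: complex_norm_square[symmetric])
  then have "cnj (z - a) = (1 - cnj a * z) / z"
    by (simp add: field_simps)
  then show ?thesis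
    by (subst complex_norm_square) simp
qed

lemma one_minus_mult_nonzero:
  fixes x y :: complex
  assumes "cmod x < 1" and "cmod y \<le> 1"
  shows "1 - x * y \<noteq> 0"
proof -
  have "cmod (x * y) < 1"
    using assms mult_left_le[of "cmod y" "cmod x"] by (simp add: norm_mult)
  then show ?thesis by auto
qed

definition pc_const :: "complex \<Rightarrow> complex \<Rightarrow> real" where
  "pc_const a b = (cmod (1 - a * cnj b))\<^sup>2 / (1 - (cmod (a * cnj b))\<^sup>2)
                  * (1 - (cmod a)\<^sup>2) * (1 - (cmod b)\<^sup>2)"

definition pc_factor :: "nat \<Rightarrow> complex \<Rightarrow> complex \<Rightarrow> complex \<Rightarrow> complex" where
  "pc_factor k a b z = z ^ (k + 1) / ((1 - cnj a * z) * (1 - cnj b * z))"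

lemma pc_density_eq:
  "pc_density a b z = pc_const a b / (2 * pi) / ((cmod (z - a))\<^sup>2 * (cmod (z - b))\<^sup>2)"
  unfolding pc_density_def pc_const_def by simp

lemma pc_density_on_unit_circle:
  assumes a: "cmod a < 1" and b: "cmod b < 1" and z: "cmod z = 1"
  shows "of_real (pc_density a b z) * z ^ k =
           of_real (pc_const a b) / (2 * of_real pi * \<i>)
           * (pc_factor k a b z / ((z - a) * (z - b))) * \<i> * z"
proof -
  have "z \<noteq> 0" "z \<noteq> a" "z \<noteq> b"
    using z a b by auto
  moreover have "1 - cnj a * z \<noteq> 0" "1 - cnj b * z \<noteq> 0"
    using one_minus_mult_nonzero[of "cnj a" z] one_minus_mult_nonzero[of "cnj b" z] a b z
    by simp_all
  moreover have dens: "of_real (pc_density a b z) = of_real (pc_const a b) / (2 * of_real pi)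
                   / ((z - a) * (1 - cnj a * z) / z * ((z - b) * (1 - cnj b * z) / z))"
    unfolding pc_density_eq of_real_divide of_real_mult norm_diff_square_on_unit_circle[OF z]
    by simp
  ultimately show ?thesis
    unfolding dens pc_factor_def by (simp add: divide_simps power_add mult_ac)
qed

lemma pc_factor_holomorphic:
  assumes a: "cmod a < 1" and b: "cmod b < 1"
  shows "pc_factor k a b holomorphic_on ball 0 1"
    and "continuous_on (cball 0 1) (pc_factor k a b)"
proof -
  have nz: "(1 - cnj a * z) * (1 - cnj b * z) \<noteq> 0" if "cmod z \<le> 1" for z
    using a b that one_minus_mult_nonzero[of "cnj a" z] one_minus_mult_nonzero[of "cnj b" z]
    by simp
  show "pc_factor k a b holomorphic_on ball 0 1"
    unfolding pc_factor_def by (intro holomorphic_intros) (use nz in auto)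
  show "continuous_on (cball 0 1) (pc_factor k a b)"
    unfolding pc_factor_def by (intro continuous_intros) (use nz in auto)
qed

lemma pc_moment_has_integral:
  assumes a: "cmod a < 1" and b: "cmod b < 1"
  shows "((\<lambda>t. of_real (pc_density a b (cis t)) * cis t ^ k) has_integral
           of_real (pc_const a b) * divided_diff (pc_factor k a b) a b) {0..2*pi}"
proof -
  define C where "C = of_real (pc_const a b) / (2 * of_real pi * \<i>)"
  have "((\<lambda>z. pc_factor k a b z / ((z - a) * (z - b))) has_contour_integral
          2 * of_real pi * \<i> * divided_diff (pc_factor k a b) a b) (circlepath 0 1)"
    using a b by (intro has_contour_integral_two_poles_circlepath pc_factor_holomorphic) auto
  from has_contour_integral_lmul[OF this, of C]
  have "((\<lambda>z. C * (pc_factor k a b z / ((z - a) * (z - b)))) has_contour_integral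
          of_real (pc_const a b) * divided_diff (pc_factor k a b) a b) (circlepath 0 1)"
    by (simp only: C_def mult.assoc[symmetric]) (simp add: field_simps)
  then show ?thesis
    unfolding has_contour_integral_unit_circlepath_iff
    by (rule has_integral_eq[rotated]) (simp add: pc_density_on_unit_circle[OF a b] C_def)
qed

lemma deriv_pc_factor_diag:
  assumes h: "1 - cnj a * a \<noteq> 0"
  shows "deriv (pc_factor k a a) a =
           (of_nat (k + 1) * a ^ k * (1 - cnj a * a) + 2 * cnj a * a ^ (k + 1)) / (1 - cnj a * a) ^ 3"
proof (rule DERIV_imp_deriv)
  have num: "((\<lambda>z. z ^ (k + 1)) has_field_derivative of_nat (k + 1) * a ^ k) (at a)"
    using DERIV_power[OF DERIV_ident, of "k + 1" a UNIV] by simp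
  have den: "((\<lambda>z. (1 - cnj a * z) * (1 - cnj a * z)) has_field_derivative
               - 2 * cnj a * (1 - cnj a * a)) (at a)"
    by (rule DERIV_cong, (rule derivative_intros)+) (simp add: algebra_simps)
  show "(pc_factor k a a has_field_derivative
           (of_nat (k + 1) * a ^ k * (1 - cnj a * a) + 2 * cnj a * a ^ (k + 1)) / (1 - cnj a * a) ^ 3) (at a)"
    unfolding pc_factor_def
    by (rule DERIV_cong[OF DERIV_divide[OF num den]])
       (use h in \<open>simp_all add: divide_simps, simp add: algebra_simps power2_eq_square power3_eq_cube\<close>)
qed

lemma of_real_pc_const:
  "of_real (pc_const a b) = (1 - a * cnj b) * (1 - cnj a * b) / (1 - a * cnj a * (b * cnj b))
                            * (1 - a * cnj a) * (1 - b * cnj b)"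
  unfolding pc_const_def of_real_mult of_real_divide of_real_diff of_real_1 complex_norm_square
  by (simp add: mult_ac)

lemma of_real_one_minus_norm_square:
  "complex_of_real (1 - (cmod (a * cnj b))\<^sup>2) = 1 - a * cnj a * (b * cnj b)"
  unfolding of_real_diff of_real_1 complex_norm_square by (simp add: mult_ac)

lemma pc_denominators_nonzero:
  assumes a: "cmod a < 1" and b: "cmod b < 1"
  shows "1 - a * cnj b \<noteq> 0" "1 - cnj a * b \<noteq> 0" "1 - cnj a * a \<noteq> 0" "1 - cnj b * b \<noteq> 0"
    and "1 - a * cnj a * (b * cnj b) \<noteq> 0"
proof -
  have "cmod (a * cnj a) < 1" "cmod (b * cnj b) \<le> 1"
    using a b mult_strict_mono'[of "cmod a" 1 "cmod a" 1] mult_le_one[of "cmod b" "cmod b"]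
    by (simp_all add: norm_mult)
  then show "1 - a * cnj a * (b * cnj b) \<noteq> 0"
    by (rule one_minus_mult_nonzero)
qed (use a b one_minus_mult_nonzero in auto)

definition pc_mean_numer :: "complex \<Rightarrow> complex \<Rightarrow> complex" where
  "pc_mean_numer a b = of_real (1 - (cmod b)\<^sup>2) * a + of_real (1 - (cmod a)\<^sup>2) * b"

definition pc_moment2_numer :: "complex \<Rightarrow> complex \<Rightarrow> complex" where
  "pc_moment2_numer a b = a\<^sup>2 + a * b + b\<^sup>2 - (a + b) * (of_real ((cmod b)\<^sup>2) * a + of_real ((cmod a)\<^sup>2) * b)
                           + of_real ((cmod a * cmod b)\<^sup>2) * a * b"

lemma pc_mean_numer_eq:
  "pc_mean_numer a b = (1 - b * cnj b) * a + (1 - a * cnj a) * b"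
  unfolding pc_mean_numer_def of_real_diff of_real_1 complex_norm_square ..

lemma pc_moment2_numer_eq:
  "pc_moment2_numer a b = a\<^sup>2 + a * b + b\<^sup>2 - (a + b) * (b * cnj b * a + a * cnj a * b)
                           + a * cnj a * (b * cnj b) * a * b"
  unfolding pc_moment2_numer_def power_mult_distrib of_real_mult complex_norm_square ..

lemma pc_first_moment_closed_form:
  assumes a: "cmod a < 1" and b: "cmod b < 1"
  shows "of_real (pc_const a b) * divided_diff (pc_factor 1 a b) a b =
           pc_mean_numer a b / of_real (1 - (cmod (a * cnj b))\<^sup>2)"
proof -
  note nz = pc_denominators_nonzero[OF a b]
  show ?thesis
  proof (cases "a = b")
    case True
    show ?thesis
      using nz unfolding True divided_diff_def of_real_pc_const of_real_one_minus_norm_square pc_mean_numer_eq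
      by (simp add: deriv_pc_factor_diag divide_simps) (simp add: algebra_simps power2_eq_square power3_eq_cube)
  next
    case False
    then show ?thesis
      using nz unfolding divided_diff_def pc_factor_def of_real_pc_const of_real_one_minus_norm_square
        pc_mean_numer_eq
      by (simp add: divide_simps) (simp add: algebra_simps power2_eq_square power3_eq_cube)
  qed
qed

lemma pc_second_moment_closed_form:
  assumes a: "cmod a < 1" and b: "cmod b < 1"
  shows "of_real (pc_const a b) * divided_diff (pc_factor 2 a b) a b =
           pc_moment2_numer a b / of_real (1 - (cmod (a * cnj b))\<^sup>2)"
proof -
  note nz = pc_denominators_nonzero[OF a b]
  show ?thesis
  proof (cases "a = b")
    case True
    show ?thesis
      using nz unfolding True divided_diff_def of_real_pc_const of_real_one_minus_norm_square pc_moment2_numer_eq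
      by (simp add: deriv_pc_factor_diag divide_simps) (simp add: algebra_simps power2_eq_square power3_eq_cube)
  next
    case False
    then show ?thesis
      using nz unfolding divided_diff_def pc_factor_def of_real_pc_const of_real_one_minus_norm_square
        pc_moment2_numer_eq
      by (simp add: divide_simps) (simp add: algebra_simps power2_eq_square power3_eq_cube)
  qed
qed

lemma circ_mean_pc_density:
  assumes "cmod a < 1" and "cmod b < 1"
  shows "circ_mean (pc_density a b) = pc_mean_numer a b / of_real (1 - (cmod (a * cnj b))\<^sup>2)"
  using integral_unique[OF pc_moment_has_integral[OF assms, of 1]]
  unfolding circ_mean_def circ_expect_def pc_first_moment_closed_form[OF assms] by simp

lemma pc_second_moment_has_integral:
  assumes "cmod a < 1" and "cmod b < 1"
  shows "((\<lambda>t. of_real (pc_density a b (cis t)) * cis t ^ 2) has_integral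
           pc_moment2_numer a b / of_real (1 - (cmod (a * cnj b))\<^sup>2)) {0..2*pi}"
  using pc_moment_has_integral[OF assms, of 2] unfolding pc_second_moment_closed_form[OF assms] .

lemma circ_expect_Im_rotated_square:
  assumes "((\<lambda>t. of_real (f (cis t)) * cis t ^ 2) has_integral m2) {0..2*pi}"
  shows "circ_expect f (\<lambda>z. of_real (Im ((z * w)\<^sup>2))) = of_real (Im (m2 * w\<^sup>2))"
proof -
  have "((\<lambda>t. of_real (f (cis t)) * cis t ^ 2 * w\<^sup>2) has_integral m2 * w\<^sup>2) {0..2*pi}"
    using assms by (rule has_integral_mult_left)
  from has_integral_of_real[OF has_integral_linear[OF this bounded_linear_Im]]
  have "((\<lambda>t. of_real (f (cis t)) * of_real (Im ((cis t * w)\<^sup>2))) has_integral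
          complex_of_real (Im (m2 * w\<^sup>2))) {0..2*pi}"
    by (simp add: o_def power_mult_distrib mult.assoc)
  then show ?thesis
    unfolding circ_expect_def by (rule integral_unique)
qed

lemma circ_skewness_from_moments:
  assumes mean: "circ_mean f = m" and "m \<noteq> 0"
    and second: "((\<lambda>t. of_real (f (cis t)) * cis t ^ 2) has_integral m2) {0..2*pi}"
  shows "circ_skewness f = Im (cnj m ^ 2 * m2) / ((cmod m)\<^sup>2 * (1 - cmod m) powr (3/2))"
proof -
  have "cis (- mean_direction f) = cnj m / of_real (cmod m)"
    unfolding mean_direction_def mean using \<open>m \<noteq> 0\<close>
    by (simp add: cis_cnj[symmetric] cis_Arg sgn_eq)
  then have "Im (m2 * (cis (- mean_direction f))\<^sup>2) = Im (cnj m ^ 2 * m2) / (cmod m)\<^sup>2"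
    by (simp add: power_divide mult.commute flip: of_real_power)
  then show ?thesis
    unfolding circ_skewness_def circ_expect_Im_rotated_square[OF second] mean_resultant_length_def mean
    by simp
qed

text \<open>Here a' and b' stand for cnj a and cnj b; treating them as independent variables makes
  this a ring identity.\<close>

lemma pc_moment_polynomial_identity:
  fixes a b a' b' :: complex
  shows "((1 - b * b') * a' + (1 - a * a') * b')\<^sup>2
           * (a\<^sup>2 + a * b + b\<^sup>2 - (a + b) * (b * b' * a + a * a' * b) + a * a' * (b * b') * a * b)
         - ((1 - b * b') * a + (1 - a * a') * b)\<^sup>2
           * (a'\<^sup>2 + a' * b' + b'\<^sup>2 - (a' + b') * (b * b' * a' + a * a' * b') + a * a' * (b * b') * a' * b')
         = (1 - a * b') * (1 - a' * b) * (a * b' - a' * b) * (a * a' - b * b') * (1 - a * a') * (1 - b * b')"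
  by (simp add: algebra_simps power2_eq_square)

lemma Im_cnj_pc_mean_numer_square_mult:
  "Im (cnj (pc_mean_numer a b) ^ 2 * pc_moment2_numer a b) =
     (cmod (1 - a * cnj b))\<^sup>2 * Im (a * cnj b) * ((cmod a)\<^sup>2 - (cmod b)\<^sup>2)
     * (1 - (cmod a)\<^sup>2) * (1 - (cmod b)\<^sup>2)"
proof -
  define X where "X = cnj (pc_mean_numer a b) ^ 2 * pc_moment2_numer a b"
  have "complex_of_real (2 * Im X) * \<i> = X - cnj X"
    by (rule complex_diff_cnj[symmetric])
  also have "\<dots> = (1 - a * cnj b) * (1 - cnj a * b) * (a * cnj b - cnj a * b) * (a * cnj a - b * cnj b)
                   * (1 - a * cnj a) * (1 - b * cnj b)"
    unfolding X_def pc_mean_numer_eq pc_moment2_numer_eq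
    using pc_moment_polynomial_identity[where a = a and b = b and a' = "cnj a" and b' = "cnj b"]
    by (simp add: mult_ac)
  also have "\<dots> = complex_of_real (2 * ((cmod (1 - a * cnj b))\<^sup>2 * Im (a * cnj b) * ((cmod a)\<^sup>2 - (cmod b)\<^sup>2)
                     * (1 - (cmod a)\<^sup>2) * (1 - (cmod b)\<^sup>2))) * \<i>"
    using complex_diff_cnj[of "a * cnj b"]
    unfolding of_real_mult of_real_diff of_real_1 complex_norm_square
    by (simp add: mult_ac)
  finally have "2 * Im X = 2 * ((cmod (1 - a * cnj b))\<^sup>2 * Im (a * cnj b) * ((cmod a)\<^sup>2 - (cmod b)\<^sup>2)
                             * (1 - (cmod a)\<^sup>2) * (1 - (cmod b)\<^sup>2))"
    by (simp only: mult_cancel_right complex_i_not_zero of_real_eq_iff simp_thms)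
  then show ?thesis
    unfolding X_def by linarith
qed

theorem corollary2:
  fixes \<phi>1 \<phi>2 :: complex and \<rho> :: real
  assumes "cmod \<phi>1 < 1" and "cmod \<phi>2 < 1"
    and "circ_mean (pc_density \<phi>1 \<phi>2) \<noteq> 0"
    and "\<rho> = cmod (of_real (1 - (cmod \<phi>2)\<^sup>2) * \<phi>1 + of_real (1 - (cmod \<phi>1)\<^sup>2) * \<phi>2)
               / (1 - (cmod (\<phi>1 * cnj \<phi>2))\<^sup>2)"
  shows "circ_skewness (pc_density \<phi>1 \<phi>2) =
           (cmod (1 - \<phi>1 * cnj \<phi>2))\<^sup>2 / (1 - (cmod (\<phi>1 * cnj \<phi>2))\<^sup>2) ^ 3
           * (1 / \<rho>\<^sup>2) * (1 - \<rho>) powr (-3/2)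
           * Im (\<phi>1 * cnj \<phi>2) * ((cmod \<phi>1)\<^sup>2 - (cmod \<phi>2)\<^sup>2)
           * (1 - (cmod \<phi>1)\<^sup>2) * (1 - (cmod \<phi>2)\<^sup>2)"
proof -
  define L where "L = 1 - (cmod (\<phi>1 * cnj \<phi>2))\<^sup>2"
  define m where "m = circ_mean (pc_density \<phi>1 \<phi>2)"
  have "m \<noteq> 0"
    using assms(3) unfolding m_def .
  have "cmod (\<phi>1 * cnj \<phi>2) < 1"
    using assms(1,2) norm_mult_less[of \<phi>1 1 "cnj \<phi>2" 1] by simp
  then have "L > 0"
    unfolding L_def by (simp add: power_less_one_iff)
  have mean: "m = pc_mean_numer \<phi>1 \<phi>2 / of_real L"
    unfolding m_def L_def using assms(1,2) by (rule circ_mean_pc_density)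
  have rho: "\<rho> = cmod m"
    using assms(4) \<open>L > 0\<close> unfolding mean norm_divide norm_of_real pc_mean_numer_def L_def[symmetric]
    by simp
  have "circ_skewness (pc_density \<phi>1 \<phi>2) =
          Im (cnj m ^ 2 * (pc_moment2_numer \<phi>1 \<phi>2 / of_real L)) / (\<rho>\<^sup>2 * (1 - \<rho>) powr (3/2))"
    unfolding rho L_def
    by (fact circ_skewness_from_moments[OF m_def[symmetric] \<open>m \<noteq> 0\<close>
          pc_second_moment_has_integral[OF assms(1,2)]])
  also have "\<dots> = Im (cnj (pc_mean_numer \<phi>1 \<phi>2) ^ 2 * pc_moment2_numer \<phi>1 \<phi>2)
                   / L ^ 3 * (1 / \<rho>\<^sup>2) * (1 - \<rho>) powr (-3/2)"
  proof -
    have moments: "cnj m ^ 2 * (pc_moment2_numer \<phi>1 \<phi>2 / of_real L) =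
            cnj (pc_mean_numer \<phi>1 \<phi>2) ^ 2 * pc_moment2_numer \<phi>1 \<phi>2 / of_real (L ^ 3)"
      unfolding mean by (simp add: power_divide power3_eq_cube power2_eq_square)
    have powr: "(1 - \<rho>) powr (-3/2) = inverse ((1 - \<rho>) powr (3/2))"
      by (simp add: powr_minus)
    show ?thesis
      unfolding moments powr Im_divide_of_real by (simp only: divide_inverse inverse_mult_distrib mult_ac)
  qed
  finally show ?thesis
    unfolding Im_cnj_pc_mean_numer_square_mult L_def by (simp add: mult_ac)
qed

end
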